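(* Let $G=(V,E,w)$, $s$, $\tau$ (with $|\tau|\ge 2$) and a budget $b\ge 0$ be as in the context, and suppose that at least one feasible subgraph exists. Then among the maximizers of $\textsc{CD}_{\tau,s}(S)$ over all feasible subgraphs $S\subseteq G$, there is one that is a tree rooted at $s$, i.e. an out-arborescence rooted at $s$ (its underlying undirected graph is a tree, $s$ has in-degree $0$ and every other vertex has in-degree $1$).
   Context: Let $G=(V,E,w)$ be a finite directed graph with non-negative edge weights $w:E\to\mathbb{R}_{\ge 0}$. A path from $u$ to $v$ in a subgraph $S\subseteq G$ is a sequence $u=v_0\to v_1\to\cdots\to v_k=v$ ($k\ge 0$) with each $v_i\to v_{i+1}$ an edge of $S$; for $i\le j$, $w_P(v_i,v_j)=\sum_{m=i}^{j-1} w(v_m\to v_{m+1})$. A vertex $y$ is reachable from $x$ in $S$ if there is a path from $x$ to $y$ in $S$ (a vertex is reachable from itself). Fix a start vertex $s\in V$ and a finite target set $\tau\subseteq V\setminus\{s\}$ with $|\tau|\ge 2$. The cost of a subgraph $S$ is $w(S)=\sum_{e\in E(S)} w(e)$. For a subgraph $S$ containing $s$ and $\tau$ in which every target is reachable from $s$: for a path $P=v_0\to\cdots\to v_k$ in $S$ with $v_0=s$, $v_k=t\in\tau$, let $\ell$ be the largest index such that some target in $\tau\setminus\{t\}$ is reachable from $v_\ell$ in $S$; the last deceptive point is $l(P,t)=v_\ell$. The unique distance of $t\in\tau$ is $\textsc{U}_S(t)=\min\{w_P(l(P,t),t): P \text{ a path in } S \text{ from } s \text{ to } t\}$, and the counterdeceptiveness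 of $S$ is $\textsc{CD}_{\tau,s}(S)=\min_{t\in\tau}\textsc{U}_S(t)$. Given a budget $b\ge 0$, a subgraph $S\subseteq G$ is feasible if $s\in V(S)$, $\tau\subseteq V(S)$, every target is reachable from $s$ in $S$, and $w(S)\le b$. A maximizer is a feasible $S$ maximizing $\textsc{CD}_{\tau,s}(S)$ among feasible subgraphs. *)

theory Defs
  imports Complex_Main
begin

type_synonym 'v sgraph = "'v set \<times> ('v \<times> 'v) set"

definition is_subgraph :: "'v set \<Rightarrow> ('v \<times> 'v) set \<Rightarrow> 'v sgraph \<Rightarrow> bool" where
  "is_subgraph V E S \<longleftrightarrow> fst S \<subseteq> V \<and> snd S \<subseteq> E \<and> snd S \<subseteq> fst S \<times> fst S"

definition is_path :: "'v sgraph \<Rightarrow> 'v list \<Rightarrow> bool" where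
  "is_path S xs \<longleftrightarrow> xs \<noteq> [] \<and> set xs \<subseteq> fst S \<and>
     (\<forall>i. Suc i < length xs \<longrightarrow> (xs ! i, xs ! Suc i) \<in> snd S)"

definition is_path_from_to :: "'v sgraph \<Rightarrow> 'v list \<Rightarrow> 'v \<Rightarrow> 'v \<Rightarrow> bool" where
  "is_path_from_to S xs u v \<longleftrightarrow> is_path S xs \<and> hd xs = u \<and> last xs = v"

definition reachable :: "'v sgraph \<Rightarrow> 'v \<Rightarrow> 'v \<Rightarrow> bool" where
  "reachable S x y \<longleftrightarrow> (\<exists>xs. is_path_from_to S xs x y)"

definition path_weight :: "('v \<times> 'v \<Rightarrow> real) \<Rightarrow> 'v list \<Rightarrow> nat \<Rightarrow> nat \<Rightarrow> real" where
  "path_weight w xs i j = (\<Sum>m\<in>{i..<j}. w (xs ! m, xs ! Suc m))"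

definition cost :: "('v \<times> 'v \<Rightarrow> real) \<Rightarrow> 'v sgraph \<Rightarrow> real" where
  "cost w S = (\<Sum>e\<in>snd S. w e)"

definition last_deceptive_index :: "'v set \<Rightarrow> 'v sgraph \<Rightarrow> 'v list \<Rightarrow> 'v \<Rightarrow> nat" where
  "last_deceptive_index \<tau> S xs t =
     (GREATEST l. l < length xs \<and> (\<exists>t'\<in>\<tau> - {t}. reachable S (xs ! l) t'))"

text \<open>Unique distance U_S(t): the minimum (attained, written as infimum) over all
  paths P from s to t in S of w_P(l(P,t), t).\<close>
definition unique_dist ::
  "('v \<times> 'v \<Rightarrow> real) \<Rightarrow> 'v set \<Rightarrow> 'v \<Rightarrow> 'v sgraph \<Rightarrow> 'v \<Rightarrow> real" where
  "unique_dist w \<tau> s S t =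
     Inf {path_weight w xs (last_deceptive_index \<tau> S xs t) (length xs - 1) | xs.
            is_path_from_to S xs s t}"

definition CD :: "('v \<times> 'v \<Rightarrow> real) \<Rightarrow> 'v set \<Rightarrow> 'v \<Rightarrow> 'v sgraph \<Rightarrow> real" where
  "CD w \<tau> s S = Min (unique_dist w \<tau> s S ` \<tau>)"

definition feasible ::
  "'v set \<Rightarrow> ('v \<times> 'v) set \<Rightarrow> ('v \<times> 'v \<Rightarrow> real) \<Rightarrow> 'v \<Rightarrow> 'v set \<Rightarrow> real \<Rightarrow> 'v sgraph \<Rightarrow> bool" where
  "feasible V E w s \<tau> b S \<longleftrightarrow> is_subgraph V E S \<and> s \<in> fst S \<and> \<tau> \<subseteq> fst S \<and>
     (\<forall>t\<in>\<tau>. reachable S s t) \<and> cost w S \<le> b"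

definition maximizer ::
  "'v set \<Rightarrow> ('v \<times> 'v) set \<Rightarrow> ('v \<times> 'v \<Rightarrow> real) \<Rightarrow> 'v \<Rightarrow> 'v set \<Rightarrow> real \<Rightarrow> 'v sgraph \<Rightarrow> bool" where
  "maximizer V E w s \<tau> b S \<longleftrightarrow> feasible V E w s \<tau> b S \<and>
     (\<forall>S'. feasible V E w s \<tau> b S' \<longrightarrow> CD w \<tau> s S' \<le> CD w \<tau> s S)"

text \<open>Underlying undirected graph of S (as a multigraph: a loop or a pair of
  antiparallel edges counts as a cycle).\<close>
definition undir_adj :: "'v sgraph \<Rightarrow> ('v \<times> 'v) set" where
  "undir_adj S = {(u, v). (u, v) \<in> snd S \<or> (v, u) \<in> snd S}"

definition undir_connected :: "'v sgraph \<Rightarrow> bool" where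
  "undir_connected S \<longleftrightarrow> (\<forall>u\<in>fst S. \<forall>v\<in>fst S. (u, v) \<in> (undir_adj S)\<^sup>*)"

definition undir_acyclic :: "'v sgraph \<Rightarrow> bool" where
  "undir_acyclic S \<longleftrightarrow>
     (\<forall>v. (v, v) \<notin> snd S) \<and>
     (\<forall>u v. (u, v) \<in> snd S \<longrightarrow> (v, u) \<notin> snd S) \<and>
     \<not> (\<exists>cs. length cs \<ge> 3 \<and> distinct cs \<and>
            (\<forall>i. Suc i < length cs \<longrightarrow> (cs ! i, cs ! Suc i) \<in> undir_adj S) \<and>
            (last cs, hd cs) \<in> undir_adj S)"

definition undir_tree :: "'v sgraph \<Rightarrow> bool" where
  "undir_tree S \<longleftrightarrow> fst S \<noteq> {} \<and> undir_connected S \<and> undir_acyclic S"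

definition in_degree :: "'v sgraph \<Rightarrow> 'v \<Rightarrow> nat" where
  "in_degree S v = card {u. (u, v) \<in> snd S}"

definition out_arborescence :: "'v sgraph \<Rightarrow> 'v \<Rightarrow> bool" where
  "out_arborescence S r \<longleftrightarrow> r \<in> fst S \<and> undir_tree S \<and> in_degree S r = 0 \<and>
     (\<forall>v\<in>fst S - {r}. in_degree S v = 1)"

end

theory Submission
  imports Defs "HOL-Library.Product_Order"
begin

text \<open>Take a maximizer \<open>S\<close>, which exists since there are only finitely many feasible
  subgraphs, and inside it a shortest-path tree \<open>T\<close> from \<open>s\<close> spanning everything reachable
  from \<open>s\<close>.  Then \<open>T\<close> is feasible, as it has fewer edges, and it is still a maximizer:
  every path of \<open>T\<close> is a path of \<open>S\<close>, and since reachability in \<open>T\<close> implies reachability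
  in \<open>S\<close>, the last deceptive point of such a path in \<open>T\<close> comes no later than in \<open>S\<close>.
  With non-negative weights this only lengthens the unique part, so \<open>U\<^sub>T(t) \<ge> U\<^sub>S(t)\<close>.\<close>

lemma is_path_mono:
  assumes "is_path T xs" "T \<le> S"
  shows "is_path S xs"
  using assms unfolding is_path_def less_eq_prod_def by blast

lemma is_path_from_to_mono:
  assumes "is_path_from_to T xs u v" "T \<le> S"
  shows "is_path_from_to S xs u v"
  using assms is_path_mono unfolding is_path_from_to_def by blast

lemma reachable_mono:
  assumes "reachable T x y" "T \<le> S"
  shows "reachable S x y"
  using assms unfolding reachable_def by (auto intro: is_path_from_to_mono)

lemma reachable_in_vertices:
  assumes "reachable S x y"
  shows "y \<in> fst S"
  using assms unfolding reachable_def is_path_from_to_def is_path_def by auto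

lemma reachable_refl:
  assumes "x \<in> fst S"
  shows "reachable S x x"
  using assms unfolding reachable_def is_path_from_to_def is_path_def
  by (intro exI[of _ "[x]"]) auto

lemma is_path_from_to_snoc:
  assumes "is_path_from_to S xs u v" "(v, y) \<in> snd S" "y \<in> fst S"
  shows "is_path_from_to S (xs @ [y]) u y"
proof -
  have "xs \<noteq> []" using assms(1) by (simp add: is_path_from_to_def is_path_def)
  have "((xs @ [y]) ! i, (xs @ [y]) ! Suc i) \<in> snd S" if "Suc i < length (xs @ [y])" for i
  proof (cases "Suc i < length xs")
    case True
    then show ?thesis using assms(1) by (simp add: nth_append is_path_from_to_def is_path_def)
  next
    case False
    then have i: "i = length xs - 1" using that by simp
    have "(xs @ [y]) ! i = v"
      using assms(1) \<open>xs \<noteq> []\<close> i by (simp add: nth_append is_path_from_to_def last_conv_nth)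
    moreover have "(xs @ [y]) ! Suc i = y" using \<open>xs \<noteq> []\<close> i by (simp add: nth_append)
    ultimately show ?thesis using assms(2) by simp
  qed
  with assms \<open>xs \<noteq> []\<close> show ?thesis by (auto simp: is_path_from_to_def is_path_def)
qed

lemma rtrancl_imp_reachable:
  assumes "(x, y) \<in> (snd S)\<^sup>*" "x \<in> fst S" "snd S \<subseteq> fst S \<times> fst S"
  shows "reachable S x y"
  using assms(1)
proof (induction rule: rtrancl_induct)
  case base
  show ?case using assms(2) by (rule reachable_refl)
next
  case (step y z)
  then obtain xs where "is_path_from_to S xs x y" unfolding reachable_def by blast
  moreover have "z \<in> fst S" using step.hyps(2) assms(3) by auto
  ultimately show ?case
    using is_path_from_to_snoc step.hyps(2) unfolding reachable_def by metis
qed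

lemma is_path_from_to_last_edge:
  assumes "is_path_from_to S xs u v" "u \<noteq> v"
  obtains ys q where "xs = ys @ [v]" "is_path_from_to S ys u q" "(q, v) \<in> snd S"
proof -
  have xs: "is_path S xs" "hd xs = u" "last xs = v" using assms(1) by (auto simp: is_path_from_to_def)
  then obtain ys where ys: "xs = ys @ [v]" unfolding is_path_def by (metis append_butlast_last_id)
  have "ys \<noteq> []" using xs(2) assms(2) ys by auto
  have edge: "((ys @ [v]) ! i, (ys @ [v]) ! Suc i) \<in> snd S" if "Suc i < Suc (length ys)" for i
    using xs(1) ys that unfolding is_path_def by simp
  have "(ys ! i, ys ! Suc i) \<in> snd S" if "Suc i < length ys" for i
    using edge[of i] that by (simp add: nth_append)
  then have "is_path_from_to S ys u (last ys)"
    using xs ys \<open>ys \<noteq> []\<close> unfolding is_path_from_to_def is_path_def by auto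
  moreover have "Suc (length ys - 1) = length ys" using \<open>ys \<noteq> []\<close> by simp
  then have "(last ys, v) \<in> snd S"
    using edge[of "length ys - 1"] \<open>ys \<noteq> []\<close> by (simp add: nth_append last_conv_nth)
  ultimately show thesis using that ys by blast
qed

lemma path_weight_nonneg:
  assumes "is_path S xs" "\<forall>e\<in>snd S. 0 \<le> w e"
  shows "0 \<le> path_weight w xs i (length xs - 1)"
  unfolding path_weight_def using assms unfolding is_path_def by (intro sum_nonneg) force

lemma path_weight_antimono:
  assumes "is_path S xs" "\<forall>e\<in>snd S. 0 \<le> w e" "i \<le> i'"
  shows "path_weight w xs i' (length xs - 1) \<le> path_weight w xs i (length xs - 1)"
  unfolding path_weight_def using assms unfolding is_path_def by (intro sum_mono2) force+

lemma last_deceptive_index_mono: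
  assumes "T \<le> S" "is_path_from_to T xs s t" "\<exists>t'\<in>\<tau> - {t}. reachable T s t'"
  shows "last_deceptive_index \<tau> T xs t \<le> last_deceptive_index \<tau> S xs t"
proof -
  let ?deceptive = "\<lambda>G l. l < length xs \<and> (\<exists>t'\<in>\<tau> - {t}. reachable G (xs ! l) t')"
  have "?deceptive T 0"
    using assms(2,3) unfolding is_path_from_to_def is_path_def by (auto simp: hd_conv_nth)
  then have "?deceptive T (Greatest (?deceptive T))"
    by (rule GreatestI_nat[where b = "length xs"]) auto
  then have "?deceptive S (Greatest (?deceptive T))"
    by (blast intro: reachable_mono[OF _ assms(1)])
  then have "Greatest (?deceptive T) \<le> Greatest (?deceptive S)"
    by (rule Greatest_le_nat[where b = "length xs"]) auto
  then show ?thesis unfolding last_deceptive_index_def .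
qed

lemma unique_dist_mono:
  assumes "T \<le> S" "\<forall>e\<in>snd S. 0 \<le> w e"
    and "reachable T s t" "\<exists>t'\<in>\<tau> - {t}. reachable T s t'"
  shows "unique_dist w \<tau> s S t \<le> unique_dist w \<tau> s T t"
proof -
  let ?U = "\<lambda>G xs. path_weight w xs (last_deceptive_index \<tau> G xs t) (length xs - 1)"
  have better: "\<exists>ys. is_path_from_to S ys s t \<and> ?U S ys \<le> ?U T xs"
    if "is_path_from_to T xs s t" for xs
  proof -
    have xs: "is_path_from_to S xs s t" using that assms(1) by (rule is_path_from_to_mono)
    then have "?U S xs \<le> ?U T xs"
      using path_weight_antimono[OF _ assms(2) last_deceptive_index_mono[OF assms(1) that assms(4)]]
      unfolding is_path_from_to_def by blast
    with xs show ?thesis by blast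
  qed
  have nonneg: "0 \<le> ?U S xs" if "is_path_from_to S xs s t" for xs
    using path_weight_nonneg[OF _ assms(2)] that unfolding is_path_from_to_def by blast
  show ?thesis unfolding unique_dist_def
  proof (rule cInf_mono)
    show "{?U T xs | xs. is_path_from_to T xs s t} \<noteq> {}"
      using assms(3) unfolding reachable_def by blast
    show "bdd_below {?U S xs | xs. is_path_from_to S xs s t}"
      using nonneg by (intro bdd_belowI) blast
  next
    fix x assume "x \<in> {?U T xs | xs. is_path_from_to T xs s t}"
    then show "\<exists>a\<in>{?U S xs | xs. is_path_from_to S xs s t}. a \<le> x" using better by blast
  qed
qed

lemma CD_mono:
  assumes "T \<le> S" "\<forall>e\<in>snd S. 0 \<le> w e" "finite \<tau>" "card \<tau> \<ge> 2"
    and "\<forall>t\<in>\<tau>. reachable T s t"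
  shows "CD w \<tau> s S \<le> CD w \<tau> s T"
  unfolding CD_def
proof (rule Min.boundedI)
  show "finite (unique_dist w \<tau> s T ` \<tau>)" "unique_dist w \<tau> s T ` \<tau> \<noteq> {}"
    using assms(3,4) by auto
  fix x assume "x \<in> unique_dist w \<tau> s T ` \<tau>"
  then obtain t where t: "t \<in> \<tau>" "x = unique_dist w \<tau> s T t" by blast
  have "card (\<tau> - {t}) > 0" using t(1) assms(3,4) by simp
  then obtain t' where "t' \<in> \<tau> - {t}" by (auto simp: card_gt_0_iff)
  then have "\<exists>t'\<in>\<tau> - {t}. reachable T s t'" using assms(5) by blast
  then have "unique_dist w \<tau> s S t \<le> x"
    unfolding t(2) using unique_dist_mono[OF assms(1,2)] assms(5) t(1) by blast
  moreover have "Min (unique_dist w \<tau> s S ` \<tau>) \<le> unique_dist w \<tau> s S t"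
    using t(1) assms(3) by (intro Min_le) auto
  ultimately show "Min (unique_dist w \<tau> s S ` \<tau>) \<le> x" by linarith
qed

definition min_path_length :: "'v sgraph \<Rightarrow> 'v \<Rightarrow> 'v \<Rightarrow> nat" where
  "min_path_length S u v = (LEAST n. \<exists>xs. is_path_from_to S xs u v \<and> length xs = n)"

lemma shortest_path_predecessor:
  assumes "reachable S s v" "v \<noteq> s"
  obtains q where "(q, v) \<in> snd S" "reachable S s q"
    "min_path_length S s q < min_path_length S s v"
proof -
  obtain xs where xs: "is_path_from_to S xs s v" "length xs = min_path_length S s v"
    using assms(1) LeastI_ex[of "\<lambda>n. \<exists>xs. is_path_from_to S xs s v \<and> length xs = n"]
    unfolding reachable_def min_path_length_def by blast
  obtain ys q where q: "xs = ys @ [v]" "is_path_from_to S ys s q" "(q, v) \<in> snd S"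
    using is_path_from_to_last_edge xs(1) assms(2) by metis
  have "min_path_length S s q \<le> length ys"
    unfolding min_path_length_def using q(2) by (intro Least_le) blast
  also have "\<dots> < length xs" using q(1) by simp
  finally have "min_path_length S s q < min_path_length S s v" using xs(2) by simp
  moreover have "reachable S s q" using q(2) unfolding reachable_def by blast
  ultimately show thesis using that q(3) by blast
qed

lemma cycle_vertex_two_neighbours:
  assumes "length cs \<ge> 3" "sym A"
    and "\<forall>i. Suc i < length cs \<longrightarrow> (cs ! i, cs ! Suc i) \<in> A" "(last cs, hd cs) \<in> A"
    and "i < length cs"
  obtains j k where "j < length cs" "k < length cs" "j \<noteq> k"
    "(cs ! i, cs ! j) \<in> A" "(cs ! i, cs ! k) \<in> A"
proof -
  let ?m = "length cs"
  have cs_ne: "cs \<noteq> []" using assms(1) by auto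
  have step: "(cs ! j, cs ! Suc j) \<in> A" "(cs ! Suc j, cs ! j) \<in> A" if "Suc j < ?m" for j
    using assms(2,3) that by (auto dest: symD)
  have close: "(cs ! 0, cs ! (?m - 1)) \<in> A" "(cs ! (?m - 1), cs ! 0) \<in> A"
    using assms(2,4) cs_ne by (auto simp: hd_conv_nth last_conv_nth dest: symD)
  consider "i = 0" | "i = ?m - 1" | "0 < i" "i < ?m - 1" using assms(5) by linarith
  then show thesis
  proof cases
    case 1
    then show thesis using that[of 1 "?m - 1"] step[of 0] close assms(1) by auto
  next
    case 2
    moreover have "Suc (?m - 2) = ?m - 1" using assms(1) by simp
    ultimately show thesis using step[of "?m - 2"] close assms(1) by (intro that[of 0 "?m - 2"]) auto
  next
    case 3
    then show thesis using that[of "i - 1" "Suc i"] step[of "i - 1"] step[of i] by auto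
  qed
qed

lemma sym_undir_adj: "sym (undir_adj S)"
  unfolding undir_adj_def sym_def by blast

text \<open>A vertex of maximal rank on an undirected cycle would need two distinct parents.\<close>

lemma undir_acyclic_if_rank_increasing:
  fixes d :: "'v \<Rightarrow> 'b::linorder"
  assumes rank: "\<And>a c. (a, c) \<in> snd S \<Longrightarrow> d a < d c"
    and parent_unique: "\<And>a a' c. (a, c) \<in> snd S \<Longrightarrow> (a', c) \<in> snd S \<Longrightarrow> a = a'"
  shows "undir_acyclic S"
  unfolding undir_acyclic_def
proof (intro conjI allI impI notI)
  fix v assume "(v, v) \<in> snd S"
  then show False using rank by blast
next
  fix u v assume "(u, v) \<in> snd S" "(v, u) \<in> snd S"
  then show False using rank by (blast dest: order.asym)
next
  assume "\<exists>cs. length cs \<ge> 3 \<and> distinct cs \<and>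
            (\<forall>i. Suc i < length cs \<longrightarrow> (cs ! i, cs ! Suc i) \<in> undir_adj S) \<and>
            (last cs, hd cs) \<in> undir_adj S"
  then obtain cs where cs: "length cs \<ge> 3" "distinct cs"
    "\<forall>i. Suc i < length cs \<longrightarrow> (cs ! i, cs ! Suc i) \<in> undir_adj S"
    "(last cs, hd cs) \<in> undir_adj S" by blast
  have "Max (d ` set cs) \<in> d ` set cs" using cs(1) by (intro Max_in) auto
  then obtain i where i: "i < length cs" "d (cs ! i) = Max (d ` set cs)"
    by (auto simp: in_set_conv_nth)
  have into_top: "(y, cs ! i) \<in> snd S" if "(cs ! i, y) \<in> undir_adj S" "y \<in> set cs" for y
  proof -
    have "d y \<le> d (cs ! i)" using i(2) that(2) by simp
    then show ?thesis using that(1) rank unfolding undir_adj_def by fastforce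
  qed
  obtain j k where jk: "j < length cs" "k < length cs" "j \<noteq> k"
    "(cs ! i, cs ! j) \<in> undir_adj S" "(cs ! i, cs ! k) \<in> undir_adj S"
    using cycle_vertex_two_neighbours[OF cs(1) sym_undir_adj cs(3,4) i(1)] by blast
  then have "cs ! j = cs ! k" using into_top parent_unique by (meson nth_mem)
  then show False using cs(2) jk(1-3) by (simp add: nth_eq_iff_index_eq)
qed

lemma undir_connected_if_rooted:
  assumes "\<And>v. v \<in> fst S \<Longrightarrow> (r, v) \<in> (snd S)\<^sup>*"
  shows "undir_connected S"
proof -
  have sub: "snd S \<subseteq> undir_adj S" unfolding undir_adj_def by blast
  have "sym ((undir_adj S)\<^sup>*)" by (rule sym_rtrancl[OF sym_undir_adj])
  then have "(r, v) \<in> (undir_adj S)\<^sup>*" "(v, r) \<in> (undir_adj S)\<^sup>*" if "v \<in> fst S" for v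
    using assms[OF that] rtrancl_mono[OF sub] by (auto dest: symD)
  then show ?thesis unfolding undir_connected_def by (meson rtrancl_trans)
qed

definition parent_graph :: "'v set \<Rightarrow> 'v \<Rightarrow> ('v \<Rightarrow> 'v) \<Rightarrow> 'v sgraph" where
  "parent_graph R r p = (R, {(p v, v) | v. v \<in> R - {r}})"

lemma parent_graph_edge_iff:
  "(a, c) \<in> snd (parent_graph R r p) \<longleftrightarrow> c \<in> R \<and> c \<noteq> r \<and> a = p c"
  unfolding parent_graph_def by auto

lemma rtrancl_parent_graph:
  fixes d :: "'v \<Rightarrow> nat"
  assumes parent: "\<And>v. v \<in> R - {r} \<Longrightarrow> p v \<in> R \<and> d (p v) < d v" and "v \<in> R"
  shows "(r, v) \<in> (snd (parent_graph R r p))\<^sup>*"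
  using assms(2)
proof (induction "d v" arbitrary: v rule: less_induct)
  case less
  show ?case
  proof (cases "v = r")
    case False
    then have "(r, p v) \<in> (snd (parent_graph R r p))\<^sup>*" using less parent by blast
    moreover have "(p v, v) \<in> snd (parent_graph R r p)"
      using False less.prems by (simp add: parent_graph_edge_iff)
    ultimately show ?thesis by (rule rtrancl_into_rtrancl)
  qed simp
qed

lemma out_arborescence_parent_graph:
  fixes d :: "'v \<Rightarrow> nat"
  assumes "r \<in> R" and parent: "\<And>v. v \<in> R - {r} \<Longrightarrow> p v \<in> R \<and> d (p v) < d v"
  shows "out_arborescence (parent_graph R r p) r"
proof -
  let ?T = "parent_graph R r p"
  have vertices: "fst ?T = R" by (simp add: parent_graph_def)
  have "undir_connected ?T"
  proof (rule undir_connected_if_rooted)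
    fix v assume "v \<in> fst ?T"
    then show "(r, v) \<in> (snd ?T)\<^sup>*"
      using parent by (intro rtrancl_parent_graph[where d = d]) (auto simp: vertices)
  qed
  moreover have "undir_acyclic ?T"
    using parent by (intro undir_acyclic_if_rank_increasing[where d = d]) (auto simp: parent_graph_edge_iff)
  moreover have "in_degree ?T r = 0" by (simp add: in_degree_def parent_graph_edge_iff)
  moreover have "in_degree ?T v = 1" if "v \<in> R - {r}" for v
  proof -
    have "{u. (u, v) \<in> snd ?T} = {p v}" using that by (auto simp: parent_graph_edge_iff)
    then show ?thesis by (simp add: in_degree_def)
  qed
  ultimately show ?thesis
    using assms(1) unfolding out_arborescence_def undir_tree_def vertices by auto
qed

lemma shortest_path_tree:
  assumes "s \<in> fst S"
  obtains T where "T \<le> S" "fst T = {v. reachable S s v}" "snd T \<subseteq> fst T \<times> fst T"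
    "\<forall>v\<in>fst T. reachable T s v" "out_arborescence T s"
proof -
  let ?R = "{v. reachable S s v}"
  let ?d = "min_path_length S s"
  have "\<forall>v \<in> ?R - {s}. \<exists>q. (q, v) \<in> snd S \<and> q \<in> ?R \<and> ?d q < ?d v"
  proof
    fix v assume "v \<in> ?R - {s}"
    then obtain q where "(q, v) \<in> snd S" "reachable S s q" "?d q < ?d v"
      using shortest_path_predecessor[of S s v] by blast
    then show "\<exists>q. (q, v) \<in> snd S \<and> q \<in> ?R \<and> ?d q < ?d v" by blast
  qed
  then obtain p where p: "\<forall>v \<in> ?R - {s}. (p v, v) \<in> snd S \<and> p v \<in> ?R \<and> ?d (p v) < ?d v"
    by (rule bchoice [elim_format]) blast
  let ?T = "parent_graph ?R s p"
  have vertices: "fst ?T = ?R" by (simp add: parent_graph_def)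
  have root: "s \<in> ?R" using assms by (simp add: reachable_refl)
  have edge: "(a, c) \<in> snd S \<and> a \<in> ?R \<and> c \<in> ?R" if "(a, c) \<in> snd ?T" for a c
    using that p unfolding parent_graph_edge_iff by blast
  have edges: "snd ?T \<subseteq> fst ?T \<times> fst ?T"
    unfolding vertices using edge by (intro subrelI) blast
  have "snd ?T \<subseteq> snd S" using edge by (intro subrelI) blast
  moreover have "fst ?T \<subseteq> fst S" using reachable_in_vertices[of S s] by (auto simp: vertices)
  ultimately have "?T \<le> S" by (simp add: less_eq_prod_def)
  moreover have "reachable ?T s v" if "v \<in> fst ?T" for v
  proof (rule rtrancl_imp_reachable[OF _ _ edges])
    show "(s, v) \<in> (snd ?T)\<^sup>*"
      using that p by (intro rtrancl_parent_graph[where d = ?d]) (auto simp: vertices)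
    show "s \<in> fst ?T" using root by (simp add: vertices)
  qed
  moreover have "out_arborescence ?T s"
    using root p by (intro out_arborescence_parent_graph[where d = ?d]) auto
  ultimately show thesis using that vertices edges by blast
qed

lemma finite_feasible:
  assumes "finite V"
  shows "finite {S. feasible V E w s \<tau> b S}"
proof (rule finite_subset)
  show "{S. feasible V E w s \<tau> b S} \<subseteq> Pow V \<times> Pow (V \<times> V)"
    unfolding feasible_def is_subgraph_def by auto
  show "finite (Pow V \<times> Pow (V \<times> V))" using assms by simp
qed

lemma exists_maximizer:
  assumes "finite V" "\<exists>S. feasible V E w s \<tau> b S"
  obtains S where "maximizer V E w s \<tau> b S"
proof -
  let ?F = "{S. feasible V E w s \<tau> b S}"
  have finite: "finite (CD w \<tau> s ` ?F)" using finite_feasible[OF assms(1)] by simp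
  moreover have "CD w \<tau> s ` ?F \<noteq> {}" using assms(2) by simp
  ultimately have "Max (CD w \<tau> s ` ?F) \<in> CD w \<tau> s ` ?F" by (rule Max_in)
  then obtain S where S: "S \<in> ?F" "CD w \<tau> s S = Max (CD w \<tau> s ` ?F)" by auto
  have "CD w \<tau> s S' \<le> CD w \<tau> s S" if "feasible V E w s \<tau> b S'" for S'
    unfolding S(2) using finite that by (intro Max_ge) auto
  with S(1) show thesis using that unfolding maximizer_def by blast
qed

lemma cost_mono:
  assumes "T \<le> S" "finite (snd S)" "\<forall>e\<in>snd S. 0 \<le> w e"
  shows "cost w T \<le> cost w S"
  using assms unfolding cost_def less_eq_prod_def by (intro sum_mono2) auto

lemma feasible_subgraph:
  assumes "feasible V E w s \<tau> b S" "T \<le> S" "snd T \<subseteq> fst T \<times> fst T"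
    and "s \<in> fst T" "\<tau> \<subseteq> fst T" "\<forall>t\<in>\<tau>. reachable T s t"
    and "finite (snd S)" "\<forall>e\<in>snd S. 0 \<le> w e"
  shows "feasible V E w s \<tau> b T"
  using assms cost_mono[OF assms(2,7,8)]
  unfolding feasible_def is_subgraph_def less_eq_prod_def by auto

theorem lemma3:
  fixes V :: "'v set" and E :: "('v \<times> 'v) set" and w :: "'v \<times> 'v \<Rightarrow> real"
    and s :: 'v and \<tau> :: "'v set" and b :: real
  assumes "finite V" and "E \<subseteq> V \<times> V" and "\<forall>e\<in>E. w e \<ge> 0"
    and "s \<in> V" and "\<tau> \<subseteq> V - {s}" and "finite \<tau>" and "card \<tau> \<ge> 2"
    and "b \<ge> 0"
    and "\<exists>S. feasible V E w s \<tau> b S"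
  shows "\<exists>S. maximizer V E w s \<tau> b S \<and> out_arborescence S s"
proof -
  obtain S where S: "maximizer V E w s \<tau> b S" by (rule exists_maximizer[OF assms(1,9)])
  then have feasible_S: "feasible V E w s \<tau> b S" by (simp add: maximizer_def)
  then have root: "s \<in> fst S" and edges: "snd S \<subseteq> E"
    by (auto simp: feasible_def is_subgraph_def)
  have weights: "\<forall>e\<in>snd S. 0 \<le> w e" using edges assms(3) by blast
  have "finite (snd S)" using edges assms(1,2) by (meson finite_SigmaI finite_subset)
  obtain T where T: "T \<le> S" "fst T = {v. reachable S s v}" "snd T \<subseteq> fst T \<times> fst T"
    "\<forall>v\<in>fst T. reachable T s v" "out_arborescence T s"
    by (rule shortest_path_tree[OF root])
  have targets: "\<tau> \<subseteq> fst T" "\<forall>t\<in>\<tau>. reachable T s t"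
    using T(2,4) feasible_S by (auto simp: feasible_def)
  have "s \<in> fst T" using T(5) by (simp add: out_arborescence_def)
  with \<open>finite (snd S)\<close> have feasible_T: "feasible V E w s \<tau> b T"
    using feasible_subgraph[OF feasible_S T(1,3) _ targets _ weights] by blast
  have "CD w \<tau> s S \<le> CD w \<tau> s T" by (rule CD_mono[OF T(1) weights assms(6,7) targets(2)])
  moreover have "CD w \<tau> s S' \<le> CD w \<tau> s S" if "feasible V E w s \<tau> b S'" for S'
    using S that unfolding maximizer_def by blast
  ultimately have "maximizer V E w s \<tau> b T"
    using feasible_T unfolding maximizer_def by (meson order_trans)
  with T(5) show ?thesis by blast
qed

end
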